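(* A vector configuration $V$ satisfies $\mathrm{DD}(V)=0$ if and only if it is centrally symmetric up to rescaling, i.e. its nonzero elements can be partitioned into pairs of the form $\{v,-\lambda v\}$ with $\lambda>0$.
   Context: A vector configuration is a finite family (repetitions allowed) $V$ of vectors in $\mathbb{R}^r$; cardinalities count multiplicities. Covector discrepancy: $\mathrm{DD}(V)=\max_f\big|\,|\{v\in V: f(v)>0\}|-|\{v\in V:f(v)<0\}|\,\big|$ over all linear functionals $f$ on $\mathbb{R}^r$. Copies of the zero vector are ignored in the notion of central symmetry. *)

theory Defs
  imports "HOL-Analysis.Analysis" "HOL-Library.Multiset"
begin

text \<open>A vector configuration in R^r is a finite multiset of vectors of type real^'n
  (r = CARD('n)). Number of elements on the positive / negative side of a linear functional.\<close>

definition pos_count :: "(real^'n \<Rightarrow> real) \<Rightarrow> (real^'n) multiset \<Rightarrow> nat" where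
  "pos_count f V = size (filter_mset (\<lambda>v. f v > 0) V)"

definition neg_count :: "(real^'n \<Rightarrow> real) \<Rightarrow> (real^'n) multiset \<Rightarrow> nat" where
  "neg_count f V = size (filter_mset (\<lambda>v. f v < 0) V)"

definition DD :: "(real^'n) multiset \<Rightarrow> nat" where
  "DD V = Max {nat \<bar>int (pos_count f V) - int (neg_count f V)\<bar> | f. linear f}"

definition cs_up_to_rescaling :: "(real^'n) multiset \<Rightarrow> bool" where
  "cs_up_to_rescaling V \<longleftrightarrow>
     (\<exists>P :: ((real^'n) \<times> (real^'n)) multiset.
        (\<forall>p \<in># P. fst p \<noteq> 0 \<and> (\<exists>c>0. snd p = - (c *\<^sub>R fst p))) \<and>
        filter_mset (\<lambda>v. v \<noteq> 0) V = image_mset fst P + image_mset snd P)"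

end

theory Submission
  imports Defs
begin

text \<open>If the nonzero vectors come in pairs \<open>v, -c v\<close> with \<open>c > 0\<close>, every linear functional
  is positive on exactly one member of each pair it does not annihilate, so all discrepancies
  vanish. Conversely, let \<open>v \<noteq> 0\<close> and pick \<open>a \<perp> v\<close> nonzero on every vector of \<open>V\<close> off the
  line \<open>\<real> v\<close>. The functionals \<open>a + e v\<close> and \<open>a - e v\<close>, for small \<open>e > 0\<close>, agree in sign with
  \<open>a\<close> off that line and with \<open>\<pm>v\<close> on it; subtracting their (zero) discrepancies shows that
  \<open>V\<close> has as many vectors on the ray of \<open>-v\<close> as on the ray of \<open>v\<close>, so some \<open>-c v\<close> lies in \<open>V\<close>.
  Removing the pair \<open>v, -c v\<close> keeps the discrepancy zero, and induction finishes the proof.\<close>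

definition balanced :: "(real^'n) multiset \<Rightarrow> bool" where
  "balanced V \<longleftrightarrow> (\<forall>f. linear f \<longrightarrow> pos_count f V = neg_count f V)"

lemma DD_eq_0_iff_balanced: "DD V = 0 \<longleftrightarrow> balanced V"
proof -
  define S where "S = {nat \<bar>int (pos_count f V) - int (neg_count f V)\<bar> | f. linear f}"
  have "nat \<bar>int (pos_count f V) - int (neg_count f V)\<bar> \<le> size V" for f
  proof -
    have "pos_count f V \<le> size V" "neg_count f V \<le> size V"
      unfolding pos_count_def neg_count_def by simp_all
    then show ?thesis by linarith
  qed
  then have "S \<subseteq> {..size V}"
    unfolding S_def by auto
  then have "finite S"
    using finite_subset by blast
  moreover have "S \<noteq> {}"
    unfolding S_def using linear_zero by blast
  ultimately have "DD V = 0 \<longleftrightarrow> (\<forall>x\<in>S. x = 0)"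
    unfolding DD_def S_def[symmetric] using Max_le_iff[of S 0] by simp
  then show ?thesis
    unfolding S_def balanced_def by auto
qed

lemma pos_count_union [simp]: "pos_count f (A + B) = pos_count f A + pos_count f B"
  by (simp add: pos_count_def)

lemma neg_count_union [simp]: "neg_count f (A + B) = neg_count f A + neg_count f B"
  by (simp add: neg_count_def)

lemma counts_eq_if_same_sign:
  assumes "\<And>u. u \<in># V \<Longrightarrow> sgn (f u) = sgn (g u)"
  shows "pos_count f V = pos_count g V" "neg_count f V = neg_count g V"
proof -
  have "f u > 0 \<longleftrightarrow> g u > 0" "f u < 0 \<longleftrightarrow> g u < 0" if "u \<in># V" for u
    using assms[OF that] by (metis sgn_greater, metis sgn_less)
  then show "pos_count f V = pos_count g V" "neg_count f V = neg_count g V"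
    unfolding pos_count_def neg_count_def by (metis (mono_tags, lifting) filter_mset_cong)+
qed

lemma counts_swap_if_opposite_sign:
  assumes "\<And>u. u \<in># V \<Longrightarrow> sgn (f u) = - sgn (g u)"
  shows "pos_count f V = neg_count g V" "neg_count f V = pos_count g V"
proof -
  have "sgn (f u) = sgn (- g u)" if "u \<in># V" for u
    using assms[OF that] by (simp add: sgn_minus)
  from counts_eq_if_same_sign[of V f "\<lambda>u. - g u", OF this]
  show "pos_count f V = neg_count g V" "neg_count f V = pos_count g V"
    by (simp_all add: pos_count_def neg_count_def)
qed

lemma balanced_union: "balanced A \<Longrightarrow> balanced B \<Longrightarrow> balanced (A + B)"
  by (simp add: balanced_def)

lemma balanced_diff: "balanced (A + B) \<Longrightarrow> balanced B \<Longrightarrow> balanced A"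
  by (simp add: balanced_def)

lemma balanced_zeros:
  fixes V :: "(real^'n) multiset"
  shows "balanced (filter_mset (\<lambda>v. v = 0) V)"
  unfolding balanced_def
proof (intro allI impI)
  fix f :: "real^'n \<Rightarrow> real"
  assume "linear f"
  then have "filter_mset (\<lambda>v. f v > 0) (filter_mset (\<lambda>v. v = 0) V) = {#}"
    "filter_mset (\<lambda>v. f v < 0) (filter_mset (\<lambda>v. v = 0) V) = {#}"
    by (auto simp: linear_0)
  then show "pos_count f (filter_mset (\<lambda>v. v = 0) V) = neg_count f (filter_mset (\<lambda>v. v = 0) V)"
    unfolding pos_count_def neg_count_def by (simp only: size_empty)
qed

lemma balanced_opposite_pair:
  fixes v :: "real^'n"
  assumes "c > 0"
  shows "balanced {#v, - (c *\<^sub>R v)#}"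
  unfolding balanced_def
proof (intro allI impI)
  fix f :: "real^'n \<Rightarrow> real"
  assume "linear f"
  then have "f (- (c *\<^sub>R v)) = - (c * f v)"
    by (simp add: linear_neg linear_cmul)
  then show "pos_count f {#v, - (c *\<^sub>R v)#} = neg_count f {#v, - (c *\<^sub>R v)#}"
    using assms by (auto simp: pos_count_def neg_count_def zero_less_mult_iff mult_less_0_iff)
qed

lemma cs_up_to_rescaling_imp_balanced:
  fixes V :: "(real^'n) multiset"
  assumes "cs_up_to_rescaling V"
  shows "balanced V"
proof -
  obtain P :: "((real^'n) \<times> (real^'n)) multiset"
    where P: "\<forall>p \<in># P. \<exists>c>0. snd p = - (c *\<^sub>R fst p)"
      and nonzero: "filter_mset (\<lambda>v. v \<noteq> 0) V = image_mset fst P + image_mset snd P"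
    using assms unfolding cs_up_to_rescaling_def by blast
  from P have "balanced (image_mset fst P + image_mset snd P)"
  proof (induction P)
    case empty
    then show ?case by (simp add: balanced_def pos_count_def neg_count_def)
  next
    case (add p P)
    then obtain c where "c > 0" "snd p = - (c *\<^sub>R fst p)"
      by auto
    then have "balanced {#fst p, snd p#}"
      using balanced_opposite_pair by metis
    with add show ?case
      using balanced_union[of "{#fst p, snd p#}"] by (simp add: add_mset_commute)
  qed
  then have "balanced (filter_mset (\<lambda>v. v \<noteq> 0) V + filter_mset (\<lambda>v. v = 0) V)"
    by (simp add: nonzero balanced_union balanced_zeros)
  then show ?thesis
    by (metis multiset_partition union_commute)
qed

lemma exists_orthogonal_not_orthogonal:
  fixes u v :: "'a::real_inner"
  assumes "u \<notin> range (\<lambda>t. t *\<^sub>R v)"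
  shows "\<exists>p. p \<bullet> v = 0 \<and> p \<bullet> u \<noteq> 0"
proof (cases "v = 0")
  case True
  then show ?thesis
    using assms by (intro exI[of _ u]) auto
next
  case False
  define p where "p = u - ((u \<bullet> v) / (v \<bullet> v)) *\<^sub>R v"
  have "p \<bullet> v = 0"
    using False by (simp add: p_def inner_diff_left)
  moreover have "p \<noteq> 0"
    using assms by (auto simp: p_def)
  moreover have "p \<bullet> u = p \<bullet> p"
    using \<open>p \<bullet> v = 0\<close> by (simp add: p_def inner_diff_right)
  ultimately show ?thesis
    by (intro exI[of _ p]) auto
qed

text \<open>Inductively: given \<open>a\<close> good for \<open>U\<close> and \<open>p\<close> good for \<open>u\<close>, all but finitely many \<open>a + t p\<close>
  are good for \<open>insert u U\<close>.\<close>
lemma exists_orthogonal_avoiding: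
  fixes v :: "'a::real_inner"
  assumes "finite U" "\<And>u. u \<in> U \<Longrightarrow> u \<notin> range (\<lambda>t. t *\<^sub>R v)"
  shows "\<exists>a. a \<bullet> v = 0 \<and> (\<forall>u\<in>U. a \<bullet> u \<noteq> 0)"
  using assms
proof (induction U rule: finite_induct)
  case empty
  show ?case by (intro exI[of _ 0]) simp
next
  case (insert u U)
  then obtain a where a: "a \<bullet> v = 0" "\<forall>w\<in>U. a \<bullet> w \<noteq> 0"
    by auto
  obtain p where p: "p \<bullet> v = 0" "p \<bullet> u \<noteq> 0"
    using exists_orthogonal_not_orthogonal insert.prems by blast
  have "finite ((\<lambda>w. - (a \<bullet> w) / (p \<bullet> w)) ` insert u U)"
    using insert.hyps(1) by simp
  then obtain t :: real where t: "t \<notin> (\<lambda>w. - (a \<bullet> w) / (p \<bullet> w)) ` insert u U"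
    using ex_new_if_finite[OF infinite_UNIV_char_0] by blast
  have "(a + t *\<^sub>R p) \<bullet> w \<noteq> 0" if w: "w \<in> insert u U" for w
  proof (cases "p \<bullet> w = 0")
    case True
    then have "w \<in> U"
      using w p by auto
    then show ?thesis
      using True a by (simp add: inner_add_left)
  next
    case False
    have "t \<noteq> - (a \<bullet> w) / (p \<bullet> w)"
      using t w by blast
    then have "a \<bullet> w + t * (p \<bullet> w) \<noteq> 0"
      using False by (auto simp: field_simps)
    then show ?thesis
      by (simp add: inner_add_left)
  qed
  then show ?case
    using a p by (intro exI[of _ "a + t *\<^sub>R p"]) (simp add: inner_add_left)
qed

lemma exists_uniform_small_factor:
  fixes g h :: "'a \<Rightarrow> real"
  assumes "finite S" "\<And>x. x \<in> S \<Longrightarrow> 0 < g x"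
  shows "\<exists>e>0. \<forall>x\<in>S. e * \<bar>h x\<bar> < g x"
proof -
  define e where "e = Min (insert 1 ((\<lambda>x. g x / (\<bar>h x\<bar> + 1)) ` S))"
  have "e > 0"
    using assms by (simp add: e_def add_pos_nonneg)
  moreover have "e * \<bar>h x\<bar> < g x" if "x \<in> S" for x
  proof -
    have "e \<le> g x / (\<bar>h x\<bar> + 1)"
      using assms(1) that by (simp add: e_def)
    then have "e * (\<bar>h x\<bar> + 1) \<le> g x"
      by (simp add: pos_le_divide_eq add_pos_nonneg)
    then show ?thesis
      using \<open>e > 0\<close> by (simp add: algebra_simps)
  qed
  ultimately show ?thesis by blast
qed

lemma sgn_add_small:
  fixes x y :: real
  assumes "\<bar>y\<bar> < \<bar>x\<bar>"
  shows "sgn (x + y) = sgn x"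
  using assms by (auto simp: sgn_real_def abs_if split: if_splits)

lemma balanced_line_counts_eq:
  fixes V :: "(real^'n) multiset" and v :: "real^'n"
  assumes bal: "balanced V"
  defines "L \<equiv> filter_mset (\<lambda>u. u \<in> range (\<lambda>t. t *\<^sub>R v)) V"
  shows "pos_count (\<lambda>u. v \<bullet> u) L = neg_count (\<lambda>u. v \<bullet> u) L"
proof -
  define W where "W = filter_mset (\<lambda>u. u \<notin> range (\<lambda>t. t *\<^sub>R v)) V"
  have V: "V = L + W"
    by (simp add: L_def W_def multiset_partition[symmetric])
  have "u \<notin> range (\<lambda>t. t *\<^sub>R v)" if "u \<in># W" for u
    using that by (simp add: W_def)
  then obtain a where a: "a \<bullet> v = 0" "\<forall>u\<in>#W. a \<bullet> u \<noteq> 0"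
    using exists_orthogonal_avoiding[of "set_mset W" v] by blast
  obtain e where "e > 0" and e: "\<forall>u\<in>#W. e * \<bar>v \<bullet> u\<bar> < \<bar>a \<bullet> u\<bar>"
    using exists_uniform_small_factor[of "set_mset W" "\<lambda>u. \<bar>a \<bullet> u\<bar>" "\<lambda>u. v \<bullet> u"] a(2)
    by force
  define fp where "fp x = (a + e *\<^sub>R v) \<bullet> x" for x
  define fm where "fm x = (a - e *\<^sub>R v) \<bullet> x" for x
  have "linear fp" "linear fm"
    unfolding fp_def fm_def by (simp_all add: linear_iff inner_add_right)
  then have fp_bal: "pos_count fp V = neg_count fp V" and fm_bal: "pos_count fm V = neg_count fm V"
    using bal by (simp_all add: balanced_def)
  have "sgn (fp u) = sgn (a \<bullet> u)" "sgn (fm u) = sgn (a \<bullet> u)" if "u \<in># W" for u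
  proof -
    have "\<bar>e * (v \<bullet> u)\<bar> < \<bar>a \<bullet> u\<bar>"
      using e that \<open>e > 0\<close> by (simp add: abs_mult)
    then show "sgn (fp u) = sgn (a \<bullet> u)" "sgn (fm u) = sgn (a \<bullet> u)"
      using sgn_add_small[of "e * (v \<bullet> u)"] sgn_add_small[of "- (e * (v \<bullet> u))"]
      by (simp_all add: fp_def fm_def inner_add_left inner_diff_left)
  qed
  then have W_counts: "pos_count fp W = pos_count fm W" "neg_count fp W = neg_count fm W"
    using counts_eq_if_same_sign[of W fp "\<lambda>u. a \<bullet> u"] counts_eq_if_same_sign[of W fm "\<lambda>u. a \<bullet> u"]
    by simp_all
  have "sgn (fp u) = sgn (v \<bullet> u)" "sgn (fm u) = - sgn (v \<bullet> u)" if "u \<in># L" for u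
  proof -
    from that obtain t where "u = t *\<^sub>R v"
      by (auto simp: L_def)
    then have "fp u = e * (v \<bullet> u)" "fm u = - (e * (v \<bullet> u))"
      using a(1) by (simp_all add: fp_def fm_def inner_add_left inner_diff_left)
    then show "sgn (fp u) = sgn (v \<bullet> u)" "sgn (fm u) = - sgn (v \<bullet> u)"
      using \<open>e > 0\<close> by (simp_all add: sgn_mult sgn_minus)
  qed
  then have "pos_count fp L = pos_count (\<lambda>u. v \<bullet> u) L"
      "neg_count fp L = neg_count (\<lambda>u. v \<bullet> u) L"
      "pos_count fm L = neg_count (\<lambda>u. v \<bullet> u) L"
      "neg_count fm L = pos_count (\<lambda>u. v \<bullet> u) L"
    using counts_eq_if_same_sign[of L fp] counts_swap_if_opposite_sign[of L fm] by simp_all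
  then show ?thesis
    using fp_bal fm_bal W_counts unfolding V by simp
qed

lemma balanced_contains_negative_multiple:
  fixes V :: "(real^'n) multiset"
  assumes "balanced V" "v \<in># V" "v \<noteq> 0"
  obtains c where "c > 0" "- (c *\<^sub>R v) \<in># V"
proof -
  define L where "L = filter_mset (\<lambda>u. u \<in> range (\<lambda>t. t *\<^sub>R v)) V"
  have "pos_count (\<lambda>u. v \<bullet> u) L = neg_count (\<lambda>u. v \<bullet> u) L"
    using balanced_line_counts_eq[OF assms(1)] by (simp add: L_def)
  moreover have "v \<in># filter_mset (\<lambda>u. v \<bullet> u > 0) L"
    using assms(2,3) by (auto simp: L_def intro: range_eqI[of _ _ 1])
  ultimately have "filter_mset (\<lambda>u. v \<bullet> u < 0) L \<noteq> {#}"
    unfolding pos_count_def neg_count_def by (metis empty_iff set_mset_empty size_eq_0_iff_empty)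
  then obtain u where "u \<in># L" "v \<bullet> u < 0"
    by fastforce
  then obtain t where "u \<in># V" "u = t *\<^sub>R v" "t * (v \<bullet> v) < 0"
    by (auto simp: L_def)
  moreover from this have "t < 0"
    using inner_ge_zero[of v] by (simp add: mult_less_0_iff)
  ultimately show ?thesis
    using that[of "- t"] by simp
qed

lemma balanced_split_opposite_pair:
  fixes V :: "(real^'n) multiset"
  assumes "balanced V" "v \<in># V" "v \<noteq> 0"
  obtains c V' where "c > 0" "V = V' + {#v, - (c *\<^sub>R v)#}" "balanced V'"
proof -
  obtain c where "c > 0" and w_in: "- (c *\<^sub>R v) \<in># V"
    using balanced_contains_negative_multiple[OF assms] by blast
  define w where "w = - (c *\<^sub>R v)"
  have "(1 + c) *\<^sub>R v \<noteq> 0"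
    using \<open>c > 0\<close> \<open>v \<noteq> 0\<close> by simp
  then have "w \<noteq> v"
    unfolding w_def by (metis add.commute neg_eq_iff_add_eq_0 scaleR_left_distrib scaleR_one)
  then have "{#v, w#} \<subseteq># V"
    using assms(2) w_in by (simp add: w_def insert_subset_eq_iff in_diff_count)
  then have V: "V = (V - {#v, w#}) + {#v, w#}"
    by (metis subset_mset.diff_add)
  moreover have "balanced {#v, w#}"
    unfolding w_def using \<open>c > 0\<close> by (rule balanced_opposite_pair)
  ultimately have "balanced (V - {#v, w#})"
    using assms(1) balanced_diff by metis
  with V \<open>c > 0\<close> show ?thesis
    using that unfolding w_def by blast
qed

lemma cs_up_to_rescaling_add_opposite_pair:
  fixes v :: "real^'n"
  assumes "cs_up_to_rescaling V" "v \<noteq> 0" "c > 0"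
  shows "cs_up_to_rescaling (V + {#v, - (c *\<^sub>R v)#})"
proof -
  obtain P :: "((real^'n) \<times> (real^'n)) multiset"
    where P: "\<forall>p \<in># P. fst p \<noteq> 0 \<and> (\<exists>c>0. snd p = - (c *\<^sub>R fst p))"
      and P_nonzero: "filter_mset (\<lambda>v. v \<noteq> 0) V = image_mset fst P + image_mset snd P"
    using assms(1) unfolding cs_up_to_rescaling_def by blast
  show ?thesis
    unfolding cs_up_to_rescaling_def
  proof (intro exI[of _ "add_mset (v, - (c *\<^sub>R v)) P"] conjI)
    show "\<forall>p \<in># add_mset (v, - (c *\<^sub>R v)) P. fst p \<noteq> 0 \<and> (\<exists>c>0. snd p = - (c *\<^sub>R fst p))"
      using P assms(2,3) by auto
    show "filter_mset (\<lambda>v. v \<noteq> 0) (V + {#v, - (c *\<^sub>R v)#}) =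
        image_mset fst (add_mset (v, - (c *\<^sub>R v)) P) + image_mset snd (add_mset (v, - (c *\<^sub>R v)) P)"
      using P_nonzero assms(2,3) by simp
  qed
qed

lemma balanced_imp_cs_up_to_rescaling:
  fixes V :: "(real^'n) multiset"
  shows "balanced V \<Longrightarrow> cs_up_to_rescaling V"
proof (induction "size V" arbitrary: V rule: less_induct)
  case less
  show ?case
  proof (cases "\<exists>v. v \<in># V \<and> v \<noteq> 0")
    case False
    then have "filter_mset (\<lambda>v. v \<noteq> 0) V = {#}"
      by auto
    then show ?thesis
      unfolding cs_up_to_rescaling_def by (intro exI[of _ "{#}"]) simp
  next
    case True
    then obtain v where "v \<in># V" "v \<noteq> 0"
      by blast
    then obtain c V' where "c > 0" and V: "V = V' + {#v, - (c *\<^sub>R v)#}" and "balanced V'"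
      using balanced_split_opposite_pair[OF less.prems] by blast
    moreover have "size V' < size V"
      by (simp add: V)
    ultimately show ?thesis
      using less.hyps \<open>v \<noteq> 0\<close> cs_up_to_rescaling_add_opposite_pair by metis
  qed
qed

theorem mainTheorem9:
  fixes V :: "(real^'n) multiset"
  shows "DD V = 0 \<longleftrightarrow> cs_up_to_rescaling V"
  using DD_eq_0_iff_balanced balanced_imp_cs_up_to_rescaling cs_up_to_rescaling_imp_balanced
  by blast

end
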